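(* Let $E\subset\mathbb R^+$. Then $$\mathrm{Dim}_\mathrm{H}E=\inf\ \mathrm{Dim}_\mathrm{H}\Big(\bigcup_{n\ge1}\bigcup_{R\in\mathcal R_n}R\Big),$$ where the infimum is taken over all families $(\mathcal R_n)_{n\ge1}$ such that, for each $n$, $\mathcal R_n$ is a family of intervals with integer endpoints, each of length a (positive integer) multiple of $n^2$, which covers $E\cap\mathcal S_n$.
   Context: $|Q|$ denotes the length of an interval $Q$. Let $\mathcal S_n=[2^{n-1},2^n)$ for $n\ge1$. For $E\subset\mathbb R^+$, $\rho\ge0$ and $n\ge1$, let $$\nu^n_\rho(E)=\inf\Big\{\sum_{i=1}^m\Big(\frac{|Q_i|}{2^n}\Big)^\rho: Q_i\subset\mathcal S_n \text{ non-trivial intervals with integer endpoints},\ E\cap\mathcal S_n\subset\bigcup_{i=1}^m Q_i\Big\},$$ the infimum being over finite families. The macroscopic Hausdorff dimension is $\mathrm{Dim}_\mathrm{H}E=\inf\{\rho\ge0:\sum_{n\ge1}\nu^n_\rho(E)<\infty\}$. *)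

theory Defs
  imports "HOL-Analysis.Analysis"
begin

definition shell :: "nat \<Rightarrow> real set" where
  "shell n = {2 ^ (n - 1) ..< 2 ^ n}"

definition int_interval :: "real set \<Rightarrow> bool" where
  "int_interval Q \<longleftrightarrow> is_interval Q \<and> bounded Q \<and> Inf Q \<in> \<int> \<and> Sup Q \<in> \<int> \<and> Inf Q < Sup Q"

definition ilen :: "real set \<Rightarrow> real" where
  "ilen Q = Sup Q - Inf Q"

definition nu :: "nat \<Rightarrow> real \<Rightarrow> real set \<Rightarrow> real" where
  "nu n \<rho> E = Inf {(\<Sum>Q\<in>F. (ilen Q / 2 ^ n) powr \<rho>) | F.
      finite F \<and> (\<forall>Q\<in>F. int_interval Q \<and> Q \<subseteq> shell n) \<and> E \<inter> shell n \<subseteq> \<Union>F}"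

definition DimH :: "real set \<Rightarrow> real" where
  "DimH E = Inf {\<rho>. 0 \<le> \<rho> \<and> summable (\<lambda>n. nu (Suc n) \<rho> E)}"

end

theory Submission
  imports Defs "HOL-Real_Asymp.Real_Asymp"
begin

text \<open>Since \<open>E \<inter> S\<^sub>n\<close> lies in the union of the \<open>n\<close>-th family, monotonicity of \<open>\<nu>\<^sup>n\<^sub>\<rho>\<close>
  gives \<open>Dim\<^sub>H E\<close> as a lower bound. Conversely, fix \<open>\<rho>\<close> with \<open>\<Sum>\<^sub>n \<nu>\<^sup>n\<^sub>\<rho>(E) < \<infinity>\<close>, take
  near-optimal covers of the sets \<open>E \<inter> S\<^sub>n\<close> and extend each interval to the right until its
  length is a multiple of \<open>n\<^sup>2\<close>. The extension is shorter than \<open>n\<^sup>2\<close>, which is negligible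
  against \<open>2\<^sup>n\<close>, so for large \<open>m\<close> the new union meets \<open>S\<^sub>m\<close> only through intervals coming from
  \<open>n \<in> {m - 1, m}\<close>. Cut to \<open>S\<^sub>m\<close>, such an interval of original length \<open>l\<close> has length at most
  \<open>l + 2m\<^sup>2\<close>, and \<open>((l + 2m\<^sup>2)/2\<^sup>m)\<^sup>\<rho>\<^sup>+\<^sup>\<epsilon> \<le> C (l/2\<^sup>n)\<^sup>\<rho>\<close> uniformly, so \<open>\<rho> + \<epsilon>\<close> is a
  summable exponent of the new union for every \<open>\<epsilon> > 0\<close>.\<close>

definition shell_cover :: "nat \<Rightarrow> real set \<Rightarrow> real set set \<Rightarrow> bool" where
  "shell_cover n X F \<longleftrightarrow> finite F \<and> (\<forall>Q\<in>F. int_interval Q \<and> Q \<subseteq> shell n) \<and> X \<inter> shell n \<subseteq> \<Union>F"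

definition cover_cost :: "nat \<Rightarrow> real \<Rightarrow> real set set \<Rightarrow> real" where
  "cover_cost n \<rho> F = (\<Sum>Q\<in>F. (ilen Q / 2 ^ n) powr \<rho>)"

lemma nu_eq_Inf_cover_cost: "nu n \<rho> X = Inf (cover_cost n \<rho> ` {F. shell_cover n X F})"
  unfolding nu_def cover_cost_def shell_cover_def by (rule arg_cong[where f = Inf]) auto

lemma cover_cost_nonneg: "0 \<le> cover_cost n \<rho> F"
  unfolding cover_cost_def by (intro sum_nonneg) auto

lemma int_interval_atLeastLessThan: "a \<in> \<int> \<Longrightarrow> b \<in> \<int> \<Longrightarrow> a < b \<Longrightarrow> int_interval {a..<b}"
  unfolding int_interval_def by (auto intro: bounded_subset[of "{a..b}"])

lemma ilen_atLeastLessThan: "a < b \<Longrightarrow> ilen {a..<b} = b - a"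
  unfolding ilen_def by simp

lemma int_interval_atLeastAtMost: "a \<in> \<int> \<Longrightarrow> b \<in> \<int> \<Longrightarrow> a < b \<Longrightarrow> int_interval {a..b}"
  unfolding int_interval_def by auto

lemma ilen_atLeastAtMost: "a \<le> b \<Longrightarrow> ilen {a..b} = b - a"
  unfolding ilen_def by simp

lemma ilen_ge_1: "int_interval Q \<Longrightarrow> 1 \<le> ilen Q"
  unfolding int_interval_def ilen_def by (auto elim!: Ints_cases)

lemma subset_Inf_Sup: "int_interval Q \<Longrightarrow> Q \<subseteq> {Inf Q..Sup Q}"
  unfolding int_interval_def
  by (auto intro: cInf_lower[OF _ bounded_imp_bdd_below] cSup_upper[OF _ bounded_imp_bdd_above])

lemma
  assumes "Q \<subseteq> shell n" "Q \<noteq> {}"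
  shows shell_le_Inf: "2 ^ (n - 1) \<le> Inf Q" and Sup_le_shell: "Sup Q \<le> 2 ^ n"
  using assms unfolding shell_def
  by (auto intro!: cInf_greatest cSup_least intro: less_imp_le)

definition unit_cover :: "nat \<Rightarrow> real set set" where
  "unit_cover n = (\<lambda>j::int. {of_int j..<of_int j + 1}) ` {2 ^ (n - 1)..<2 ^ n}"

lemma unit_cover_member:
  assumes "Q \<in> unit_cover n"
  shows "int_interval Q \<and> Q \<subseteq> shell n"
proof -
  obtain j :: int where j: "2 ^ (n - 1) \<le> j" "j + 1 \<le> 2 ^ n" and Q: "Q = {of_int j..<of_int j + 1}"
    using assms unfolding unit_cover_def by auto
  have "real_of_int (2 ^ (n - 1)) \<le> of_int j" "of_int (j + 1) \<le> real_of_int (2 ^ n)"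
    using j by (simp_all only: of_int_le_iff)
  then have "(2::real) ^ (n - 1) \<le> of_int j" "of_int j + 1 \<le> (2::real) ^ n"
    by simp_all
  then show ?thesis
    unfolding Q shell_def by (auto intro!: int_interval_atLeastLessThan)
qed

lemma shell_subset_unit_cover: "shell n \<subseteq> \<Union>(unit_cover n)"
proof
  fix x assume "x \<in> shell n"
  then have "\<lfloor>x\<rfloor> \<in> {2 ^ (n - 1)..<2 ^ n}"
    unfolding shell_def by (simp add: le_floor_iff floor_less_iff)
  then have "{of_int \<lfloor>x\<rfloor>..<of_int \<lfloor>x\<rfloor> + 1} \<in> unit_cover n"
    unfolding unit_cover_def by (rule imageI)
  moreover have "x \<in> {of_int \<lfloor>x\<rfloor>..<of_int \<lfloor>x\<rfloor> + 1}"
    by simp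
  ultimately show "x \<in> \<Union>(unit_cover n)" ..
qed

lemma shell_cover_unit_cover: "shell_cover n X (unit_cover n)"
proof -
  have "finite (unit_cover n)"
    unfolding unit_cover_def by simp
  then show ?thesis
    using unit_cover_member shell_subset_unit_cover unfolding shell_cover_def by blast
qed

lemma cover_costs_nonempty: "cover_cost n \<rho> ` {F. shell_cover n X F} \<noteq> {}"
  using shell_cover_unit_cover by blast

lemma bdd_below_cover_costs: "bdd_below (cover_cost n \<rho> ` {F. shell_cover n X F})"
  by (rule bdd_belowI[of _ 0]) (auto simp: cover_cost_nonneg)

lemma nu_nonneg: "0 \<le> nu n \<rho> X"
  unfolding nu_eq_Inf_cover_cost
  by (rule cInf_greatest[OF cover_costs_nonempty]) (auto simp: cover_cost_nonneg)

lemma nu_le_cover_cost: "shell_cover n X F \<Longrightarrow> nu n \<rho> X \<le> cover_cost n \<rho> F"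
  unfolding nu_eq_Inf_cover_cost by (rule cInf_lower[OF _ bdd_below_cover_costs]) simp

lemma exists_shell_cover_cost_less:
  assumes "0 < \<delta>"
  obtains F where "shell_cover n X F" "cover_cost n \<rho> F < nu n \<rho> X + \<delta>"
proof -
  have "Inf (cover_cost n \<rho> ` {F. shell_cover n X F}) < nu n \<rho> X + \<delta>"
    using assms unfolding nu_eq_Inf_cover_cost by simp
  from cInf_lessD[OF cover_costs_nonempty this] show ?thesis
    using that by blast
qed

lemma nu_mono:
  assumes "X \<inter> shell n \<subseteq> Y"
  shows "nu n \<rho> X \<le> nu n \<rho> Y"
proof -
  have "nu n \<rho> X \<le> cover_cost n \<rho> F" if "shell_cover n Y F" for F
    using that assms by (intro nu_le_cover_cost) (auto simp: shell_cover_def)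
  then show ?thesis
    unfolding nu_eq_Inf_cover_cost[of n \<rho> Y] by (intro cInf_greatest[OF cover_costs_nonempty]) blast
qed

lemma nu_two_le: "nu n 2 X \<le> (1 / 2) ^ n"
proof -
  have "nu n 2 X \<le> cover_cost n 2 (unit_cover n)"
    by (rule nu_le_cover_cost[OF shell_cover_unit_cover])
  also have "\<dots> \<le> (\<Sum>j\<in>{2 ^ (n - 1)..<(2::int) ^ n}. (1 / 2 ^ n) powr 2)"
    unfolding cover_cost_def unit_cover_def
    by (rule order_trans[OF sum_image_le]) (auto simp: ilen_atLeastLessThan)
  also have "\<dots> = real (nat (2 ^ n - 2 ^ (n - 1))) * (1 / 2 ^ n) ^ 2"
    by simp
  also have "\<dots> \<le> 2 ^ n * (1 / 2 ^ n) ^ 2"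
    by (intro mult_right_mono) auto
  also have "\<dots> = (1 / 2) ^ n"
    by (simp add: power2_eq_square power_divide)
  finally show ?thesis .
qed

definition summable_exponents :: "real set \<Rightarrow> real set" where
  "summable_exponents X = {\<rho>. 0 \<le> \<rho> \<and> summable (\<lambda>n. nu (Suc n) \<rho> X)}"

lemma DimH_eq_Inf_summable_exponents: "DimH X = Inf (summable_exponents X)"
  unfolding DimH_def summable_exponents_def ..

lemma two_in_summable_exponents: "2 \<in> summable_exponents X"
proof -
  have "summable (\<lambda>n. nu (Suc n) 2 X)"
  proof (rule summable_comparison_test')
    show "summable (\<lambda>n. (1 / 2 :: real) ^ Suc n)"
      by (simp add: summable_geometric)
    show "norm (nu (Suc n) 2 X) \<le> (1 / 2) ^ Suc n" for n
      using nu_two_le[of "Suc n" X] nu_nonneg[of "Suc n" 2 X] by simp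
  qed
  then show ?thesis
    unfolding summable_exponents_def by simp
qed

lemma bdd_below_summable_exponents: "bdd_below (summable_exponents X)"
  unfolding summable_exponents_def by (rule bdd_belowI[of _ 0]) auto

lemma DimH_le: "\<rho> \<in> summable_exponents X \<Longrightarrow> DimH X \<le> \<rho>"
  unfolding DimH_eq_Inf_summable_exponents by (rule cInf_lower[OF _ bdd_below_summable_exponents])

lemma DimH_mono_shells:
  assumes "\<And>n. 1 \<le> n \<Longrightarrow> X \<inter> shell n \<subseteq> Y"
  shows "DimH X \<le> DimH Y"
proof -
  have "summable_exponents Y \<subseteq> summable_exponents X"
  proof
    fix \<rho> assume "\<rho> \<in> summable_exponents Y"
    then have "0 \<le> \<rho>" and summable_Y: "summable (\<lambda>n. nu (Suc n) \<rho> Y)"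
      unfolding summable_exponents_def by auto
    have "norm (nu (Suc n) \<rho> X) \<le> nu (Suc n) \<rho> Y" for n
      using nu_mono[OF assms, of "Suc n" \<rho>] nu_nonneg[of "Suc n" \<rho> X] by simp
    with summable_Y have "summable (\<lambda>n. nu (Suc n) \<rho> X)"
      by (rule summable_comparison_test'[where N = 0])
    with \<open>0 \<le> \<rho>\<close> show "\<rho> \<in> summable_exponents X"
      unfolding summable_exponents_def by simp
  qed
  then show ?thesis
    unfolding DimH_eq_Inf_summable_exponents using two_in_summable_exponents
    by (intro cInf_superset_mono bdd_below_summable_exponents) auto
qed

lemma exists_summable_shell_covers:
  assumes "\<rho> \<in> summable_exponents X"
  obtains F where "\<And>n. shell_cover n X (F n)" "summable (\<lambda>n. cover_cost n \<rho> (F n))"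
proof -
  have "\<exists>F. shell_cover n X F \<and> cover_cost n \<rho> F < nu n \<rho> X + (1 / 2) ^ n" for n
    using exists_shell_cover_cost_less[of "(1 / 2) ^ n"]
    by (metis zero_less_divide_1_iff zero_less_numeral zero_less_power)
  then obtain F where cover: "\<And>n. shell_cover n X (F n)"
    and cost: "\<And>n. cover_cost n \<rho> (F n) < nu n \<rho> X + (1 / 2) ^ n"
    by metis
  have "summable (\<lambda>n. nu n \<rho> X)"
    using assms unfolding summable_exponents_def by (subst summable_Suc_iff[symmetric]) simp
  then have "summable (\<lambda>n. nu n \<rho> X + (1 / 2) ^ n)"
    by (intro summable_add) (simp_all add: summable_geometric)
  then have "summable (\<lambda>n. cover_cost n \<rho> (F n))"
    by (rule summable_comparison_test'[where N = 0]) (use cost cover_cost_nonneg in \<open>auto intro: less_imp_le\<close>)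
  with cover show ?thesis
    using that by blast
qed

lemma exists_powr_ratio_bound:
  fixes \<rho> \<epsilon> :: real
  assumes "0 \<le> \<rho>" "0 < \<epsilon>"
  obtains C where "0 \<le> C"
    "\<And>(m::nat) l t. 1 \<le> l \<Longrightarrow> l \<le> 2 ^ m \<Longrightarrow> 0 \<le> t \<Longrightarrow> t \<le> l + 2 * real m ^ 2 \<Longrightarrow>
       (t / 2 ^ m) powr (\<rho> + \<epsilon>) \<le> C * (l / 2 ^ m) powr \<rho>"
proof -
  define r where "r = \<rho> + \<epsilon>"
  have r: "0 \<le> r" "\<rho> \<le> r"
    using assms unfolding r_def by auto
  have "(\<lambda>m::nat. (4 * real m ^ 2) powr r / 2 powr (real m * \<epsilon>)) \<longlonglongrightarrow> 0"
    using assms(2) by real_asymp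
  then have "Bseq (\<lambda>m::nat. (4 * real m ^ 2) powr r / 2 powr (real m * \<epsilon>))"
    by (intro convergent_imp_Bseq) (auto simp: convergent_def)
  then obtain K where K: "0 < K" "\<And>m::nat. (4 * real m ^ 2) powr r / 2 powr (real m * \<epsilon>) \<le> K"
    by (auto elim!: BseqE)
  define C where "C = max (2 powr r) K"
  have "(t / 2 ^ m) powr r \<le> C * (l / 2 ^ m) powr \<rho>"
    if l: "1 \<le> l" "l \<le> 2 ^ m" and t: "0 \<le> t" "t \<le> l + 2 * real m ^ 2" for m :: nat and l t :: real
  proof (cases "2 * real m ^ 2 \<le> l")
    case True
    then have "(t / 2 ^ m) powr r \<le> (2 * (l / 2 ^ m)) powr r"
      using t by (intro powr_mono2 r) (simp_all add: divide_right_mono)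
    also have "\<dots> = 2 powr r * (l / 2 ^ m) powr r"
      using l by (subst powr_mult) auto
    also have "\<dots> \<le> C * (l / 2 ^ m) powr \<rho>"
      unfolding C_def using l r K(1) by (intro mult_mono powr_mono') auto
    finally show ?thesis .
  next
    case False
    \<comment> \<open>Here the polynomial bound \<open>t \<le> 4 m\<^sup>2\<close> is absorbed by the extra factor \<open>2 powr (- m \<epsilon>)\<close>.\<close>
    then have "(t / 2 ^ m) powr r \<le> (4 * real m ^ 2 / 2 ^ m) powr r"
      using t by (intro powr_mono2 r) (simp_all add: divide_right_mono)
    also have "\<dots> = (4 * real m ^ 2) powr r / 2 powr (real m * \<epsilon>) * (1 / 2 ^ m) powr \<rho>"
      by (simp add: powr_divide powr_realpow[symmetric] powr_powr r_def powr_add algebra_simps)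
    also have "\<dots> \<le> K * (l / 2 ^ m) powr \<rho>"
      using K l assms(1) by (intro mult_mono powr_mono2) (auto simp: divide_right_mono)
    also have "\<dots> \<le> C * (l / 2 ^ m) powr \<rho>"
      unfolding C_def by (intro mult_right_mono) auto
    finally show ?thesis .
  qed
  moreover have "0 \<le> C"
    unfolding C_def using K by auto
  ultimately show ?thesis
    using that unfolding r_def by blast
qed

definition round_up_sq :: "nat \<Rightarrow> real \<Rightarrow> real" where
  "round_up_sq n l = real (nat \<lceil>l / real n ^ 2\<rceil> * n ^ 2)"

lemma round_up_sq_bounds:
  assumes "1 \<le> n" "0 < l"
  shows "\<exists>k\<ge>1. round_up_sq n l = real (k * n ^ 2)"
    and "l \<le> round_up_sq n l"
    and "round_up_sq n l < l + real n ^ 2"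
proof -
  have n2: "0 < real n ^ 2"
    using assms by simp
  have ceil_pos: "0 < \<lceil>l / real n ^ 2\<rceil>"
    using assms n2 by simp
  then have k: "real (nat \<lceil>l / real n ^ 2\<rceil>) = of_int \<lceil>l / real n ^ 2\<rceil>"
    by simp
  have "1 \<le> nat \<lceil>l / real n ^ 2\<rceil>"
    using ceil_pos by linarith
  then show "\<exists>k\<ge>1. round_up_sq n l = real (k * n ^ 2)"
    unfolding round_up_sq_def by blast
  have "l = l / real n ^ 2 * real n ^ 2"
    using n2 by simp
  also have "\<dots> \<le> of_int \<lceil>l / real n ^ 2\<rceil> * real n ^ 2"
    by (intro mult_right_mono) simp_all
  finally have "l \<le> of_int \<lceil>l / real n ^ 2\<rceil> * real n ^ 2" .
  then show "l \<le> round_up_sq n l"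
    unfolding round_up_sq_def using k by simp
  have "of_int \<lceil>l / real n ^ 2\<rceil> < l / real n ^ 2 + 1"
    by linarith
  then have "of_int \<lceil>l / real n ^ 2\<rceil> * real n ^ 2 < l + real n ^ 2"
    using n2 by (simp add: field_simps)
  then show "round_up_sq n l < l + real n ^ 2"
    unfolding round_up_sq_def using k by simp
qed

definition padded :: "nat \<Rightarrow> real set \<Rightarrow> real set" where
  "padded n Q = {Inf Q..Inf Q + round_up_sq n (ilen Q)}"

lemma
  assumes "1 \<le> n" "int_interval Q"
  shows int_interval_padded: "int_interval (padded n Q)"
    and ilen_padded: "\<exists>k\<ge>1. ilen (padded n Q) = real (k * n ^ 2)"
    and subset_padded: "Q \<subseteq> padded n Q"
    and padded_subset: "padded n Q \<subseteq> {Inf Q..<Sup Q + real n ^ 2}"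
proof -
  have l: "0 < ilen Q"
    using ilen_ge_1[OF assms(2)] by simp
  obtain k where k: "1 \<le> k" "round_up_sq n (ilen Q) = real (k * n ^ 2)"
    using round_up_sq_bounds(1)[OF assms(1) l] by blast
  have pos: "0 < round_up_sq n (ilen Q)"
    using round_up_sq_bounds(2)[OF assms(1) l] l by simp
  have Inf: "Inf Q \<in> \<int>"
    using assms(2) unfolding int_interval_def by simp
  show "int_interval (padded n Q)"
    unfolding padded_def using Inf pos k(2) by (intro int_interval_atLeastAtMost) auto
  show "\<exists>k\<ge>1. ilen (padded n Q) = real (k * n ^ 2)"
    unfolding padded_def using pos k by (auto simp: ilen_atLeastAtMost)
  show "Q \<subseteq> padded n Q"
    using subset_Inf_Sup[OF assms(2)] round_up_sq_bounds(2)[OF assms(1) l]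
    unfolding padded_def ilen_def by auto
  show "padded n Q \<subseteq> {Inf Q..<Sup Q + real n ^ 2}"
    using round_up_sq_bounds(3)[OF assms(1) l] unfolding padded_def ilen_def by auto
qed

lemma sq_le_two_pow: "4 \<le> n \<Longrightarrow> n ^ 2 \<le> (2::nat) ^ n"
proof (induction n rule: dec_induct)
  case base
  then show ?case by simp
next
  case (step n)
  have "(Suc n) ^ 2 = n ^ 2 + 2 * n + 1"
    by (simp add: power2_eq_square)
  also have "\<dots> \<le> n ^ 2 + n ^ 2"
  proof -
    have "4 * n \<le> n * n"
      using step(1) by (intro mult_right_mono) auto
    then show ?thesis
      using step(1) unfolding power2_eq_square by linarith
  qed
  also have "\<dots> \<le> 2 ^ Suc n"
    using step(3) by simp
  finally show ?case .
qed

lemma two_pow_add_sq_le: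
  assumes "n + 2 \<le> m" "6 \<le> m"
  shows "(2::real) ^ n + real n ^ 2 \<le> 2 ^ (m - 1)"
proof -
  have "(2::nat) ^ n + n ^ 2 \<le> 2 ^ (m - 1)"
  proof (cases "n \<le> 3")
    case True
    have "(2::nat) ^ n \<le> 2 ^ 3"
      using True by (intro power_increasing) auto
    moreover have "n ^ 2 \<le> 3 ^ 2"
      using True by (intro power_mono) auto
    moreover have "(2::nat) ^ 5 \<le> 2 ^ (m - 1)"
      using assms by (intro power_increasing) auto
    ultimately show ?thesis by simp
  next
    case False
    then have "(2::nat) ^ n + n ^ 2 \<le> 2 ^ Suc n"
      using sq_le_two_pow[of n] by simp
    also have "\<dots> \<le> 2 ^ (m - 1)"
      using assms by (intro power_increasing) auto
    finally show ?thesis .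
  qed
  then have "real (2 ^ n + n ^ 2) \<le> real (2 ^ (m - 1))"
    by (simp only: of_nat_le_iff)
  then show ?thesis by simp
qed

lemma shell_index_near:
  assumes "x \<in> shell m" "6 \<le> m" "2 ^ (n - 1) \<le> x" "x < 2 ^ n + real n ^ 2"
  shows "m = n \<or> m = n + 1"
proof -
  have "n \<le> m"
  proof (rule ccontr)
    assume "\<not> n \<le> m"
    then have "(2::real) ^ m \<le> 2 ^ (n - 1)"
      by (intro power_increasing) auto
    moreover have "x < 2 ^ m"
      using assms(1) unfolding shell_def by simp
    ultimately show False
      using assms(3) by linarith
  qed
  moreover have "m \<le> n + 1"
  proof (rule ccontr)
    assume "\<not> m \<le> n + 1"
    then have "(2::real) ^ n + real n ^ 2 \<le> 2 ^ (m - 1)"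
      using assms(2) by (intro two_pow_add_sq_le) auto
    moreover have "2 ^ (m - 1) \<le> x"
      using assms(1) unfolding shell_def by simp
    ultimately show False
      using assms(4) by linarith
  qed
  ultimately show ?thesis by auto
qed

text \<open>The closed interval \<open>P\<close> may end at an integer point of \<open>shell m\<close>, so its trace on the
  half-open shell is covered by a half-open integer interval of one extra unit.\<close>
definition shell_trace :: "nat \<Rightarrow> real set \<Rightarrow> real set" where
  "shell_trace m P = {max (Inf P) (2 ^ (m - 1))..<min (Sup P + 1) (2 ^ m)}"

lemma shell_trace_subset: "shell_trace m P \<subseteq> shell m"
  unfolding shell_trace_def shell_def by auto

lemma
  assumes "a \<in> \<int>" "b \<in> \<int>" "x \<in> {a..b}" "x \<in> shell m"
  shows int_interval_shell_trace: "int_interval (shell_trace m {a..b})"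
    and mem_shell_trace: "x \<in> shell_trace m {a..b}"
    and ilen_shell_trace: "0 \<le> ilen (shell_trace m {a..b})" "ilen (shell_trace m {a..b}) \<le> b - a + 1"
proof -
  have ab: "a \<le> b"
    using assms(3) by simp
  have "max a (2 ^ (m - 1)) \<le> x" "x < min (b + 1) (2 ^ m)"
    using assms(3,4) unfolding shell_def by auto
  then have lt: "max a (2 ^ (m - 1)) < min (b + 1) (2 ^ m)"
    by linarith
  have "max a (2 ^ (m - 1)) \<in> \<int>" "min (b + 1) (2 ^ m) \<in> \<int>"
    using assms(1,2) by (simp_all add: max_def min_def)
  then show "int_interval (shell_trace m {a..b})"
    unfolding shell_trace_def using ab lt by (simp add: int_interval_atLeastLessThan)
  show "x \<in> shell_trace m {a..b}"
    unfolding shell_trace_def using ab assms(3,4) unfolding shell_def by auto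
  have "ilen (shell_trace m {a..b}) = min (b + 1) (2 ^ m) - max a (2 ^ (m - 1))"
    unfolding shell_trace_def using ab lt by (simp add: ilen_atLeastLessThan)
  then show "0 \<le> ilen (shell_trace m {a..b})" "ilen (shell_trace m {a..b}) \<le> b - a + 1"
    using lt by linarith+
qed

lemma padded_integer_endpoints: "int_interval Q \<Longrightarrow> Inf Q \<in> \<int> \<and> Inf Q + round_up_sq n (ilen Q) \<in> \<int>"
  unfolding int_interval_def round_up_sq_def by auto

lemma padded_trace_cost_le:
  assumes bound: "\<And>(m::nat) l t. 1 \<le> l \<Longrightarrow> l \<le> 2 ^ m \<Longrightarrow> 0 \<le> t \<Longrightarrow> t \<le> l + 2 * real m ^ 2 \<Longrightarrow>
       (t / 2 ^ m) powr (\<rho> + \<epsilon>) \<le> C * (l / 2 ^ m) powr \<rho>"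
    and "0 \<le> C" "0 \<le> \<rho>" "1 \<le> n" "n \<le> m"
    and Q: "int_interval Q" "Q \<subseteq> shell n" "Q \<noteq> {}"
    and x: "x \<in> padded n Q" "x \<in> shell m"
  shows "(ilen (shell_trace m (padded n Q)) / 2 ^ m) powr (\<rho> + \<epsilon>) \<le> C * (ilen Q / 2 ^ n) powr \<rho>"
proof -
  define a where "a = Inf Q"
  define b where "b = Inf Q + round_up_sq n (ilen Q)"
  have P: "padded n Q = {a..b}"
    unfolding padded_def a_def b_def ..
  have ab: "a \<in> \<int>" "b \<in> \<int>"
    using padded_integer_endpoints[OF Q(1)] unfolding a_def b_def by auto
  have l: "1 \<le> ilen Q" "0 < ilen Q"
    using ilen_ge_1[OF Q(1)] by simp_all
  have "ilen Q \<le> 2 ^ n"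
    using shell_le_Inf[OF Q(2,3)] Sup_le_shell[OF Q(2,3)] zero_le_power[of "2::real" "n - 1"]
    unfolding ilen_def by linarith
  also have "\<dots> \<le> 2 ^ m"
    using \<open>n \<le> m\<close> by (intro power_increasing) auto
  finally have l_le: "ilen Q \<le> 2 ^ m" .
  have "real n ^ 2 \<le> real m ^ 2" "1 \<le> real m ^ 2"
    using \<open>1 \<le> n\<close> \<open>n \<le> m\<close> by (simp_all add: power_mono)
  then have t_le: "ilen (shell_trace m {a..b}) \<le> ilen Q + 2 * real m ^ 2"
    using ilen_shell_trace(2)[OF ab x[unfolded P]] round_up_sq_bounds(3)[OF \<open>1 \<le> n\<close> l(2)]
    unfolding a_def b_def by linarith
  have "(ilen (shell_trace m {a..b}) / 2 ^ m) powr (\<rho> + \<epsilon>) \<le> C * (ilen Q / 2 ^ m) powr \<rho>"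
    using bound[OF l(1) l_le ilen_shell_trace(1)[OF ab x[unfolded P]] t_le] .
  also have "\<dots> \<le> C * (ilen Q / 2 ^ n) powr \<rho>"
    using assms(2,3,5) l by (intro mult_left_mono powr_mono2 divide_left_mono power_increasing) auto
  finally show ?thesis
    unfolding P .
qed

text \<open>Empty members of a cover are dropped, since \<open>Inf {}\<close> and \<open>Sup {}\<close> are unspecified.\<close>
definition padded_family :: "(nat \<Rightarrow> real set set) \<Rightarrow> nat \<Rightarrow> real set set" where
  "padded_family F n = padded n ` {Q \<in> F n. Q \<noteq> {}}"

lemma padded_family_admissible:
  assumes "\<And>n. shell_cover n E (F n)"
  shows "\<forall>n\<ge>1. (\<forall>P\<in>padded_family F n. int_interval P \<and> (\<exists>k::nat. k \<ge> 1 \<and> ilen P = real (k * n ^ 2)))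
           \<and> E \<inter> shell n \<subseteq> \<Union>(padded_family F n)"
proof (intro allI impI conjI ballI)
  fix n :: nat and P assume n: "1 \<le> n" and "P \<in> padded_family F n"
  then obtain Q where "Q \<in> F n" "P = padded n Q"
    unfolding padded_family_def by auto
  then show "int_interval P" "\<exists>k::nat. k \<ge> 1 \<and> ilen P = real (k * n ^ 2)"
    using assms[of n] int_interval_padded[OF n] ilen_padded[OF n] unfolding shell_cover_def by auto
next
  fix n :: nat assume n: "1 \<le> n"
  show "E \<inter> shell n \<subseteq> \<Union>(padded_family F n)"
  proof
    fix x assume "x \<in> E \<inter> shell n"
    then obtain Q where "Q \<in> F n" "x \<in> Q"
      using assms[of n] unfolding shell_cover_def by blast
    then show "x \<in> \<Union>(padded_family F n)"
      using assms[of n] subset_padded[OF n] unfolding shell_cover_def padded_family_def by blast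
  qed
qed

definition padded_traces :: "(nat \<Rightarrow> real set set) \<Rightarrow> nat \<Rightarrow> nat \<Rightarrow> real set set" where
  "padded_traces F m n =
     (\<lambda>Q. shell_trace m (padded n Q)) ` {Q \<in> F n. Q \<noteq> {} \<and> padded n Q \<inter> shell m \<noteq> {}}"

lemma
  assumes "int_interval Q" "x \<in> padded n Q" "x \<in> shell m"
  shows int_interval_padded_trace: "int_interval (shell_trace m (padded n Q))"
    and mem_padded_trace: "x \<in> shell_trace m (padded n Q)"
proof -
  have ends: "Inf Q \<in> \<int>" "Inf Q + round_up_sq n (ilen Q) \<in> \<int>"
    using padded_integer_endpoints[OF assms(1)] by auto
  show "int_interval (shell_trace m (padded n Q))"
    using int_interval_shell_trace[OF ends assms(2)[unfolded padded_def] assms(3)] unfolding padded_def .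
  show "x \<in> shell_trace m (padded n Q)"
    using mem_shell_trace[OF ends assms(2)[unfolded padded_def] assms(3)] unfolding padded_def .
qed

lemma shell_cover_padded_traces:
  assumes covers: "\<And>n. shell_cover n E (F n)" and "6 \<le> m"
  shows "shell_cover m (\<Union>n\<in>{1..}. \<Union>(padded_family F n)) (padded_traces F m m \<union> padded_traces F m (m - 1))"
proof -
  have "finite (padded_traces F m m \<union> padded_traces F m (m - 1))"
    using covers unfolding shell_cover_def padded_traces_def by auto
  moreover have "int_interval T \<and> T \<subseteq> shell m"
    if T: "T \<in> padded_traces F m m \<union> padded_traces F m (m - 1)" for T
  proof -
    obtain n Q x where "Q \<in> F n" "x \<in> padded n Q" "x \<in> shell m" "T = shell_trace m (padded n Q)"
      using T unfolding padded_traces_def by blast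
    moreover have "int_interval Q"
      using covers[of n] \<open>Q \<in> F n\<close> unfolding shell_cover_def by blast
    ultimately show ?thesis
      using int_interval_padded_trace shell_trace_subset by blast
  qed
  moreover have "(\<Union>n\<in>{1..}. \<Union>(padded_family F n)) \<inter> shell m \<subseteq> \<Union>(padded_traces F m m \<union> padded_traces F m (m - 1))"
  proof
    fix x assume "x \<in> (\<Union>n\<in>{1..}. \<Union>(padded_family F n)) \<inter> shell m"
    then obtain n Q where n: "1 \<le> n" and Q: "Q \<in> F n" "Q \<noteq> {}" and x: "x \<in> padded n Q" "x \<in> shell m"
      unfolding padded_family_def by auto
    have Q_in: "int_interval Q" "Q \<subseteq> shell n"
      using covers[of n] Q unfolding shell_cover_def by auto
    have "2 ^ (n - 1) \<le> x" "x < 2 ^ n + real n ^ 2"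
      using padded_subset[OF n Q_in(1)] x(1) shell_le_Inf[OF Q_in(2) Q(2)] Sup_le_shell[OF Q_in(2) Q(2)]
      by force+
    then have "n = m \<or> n = m - 1"
      using shell_index_near[OF x(2) \<open>6 \<le> m\<close>, of n] by auto
    moreover have "x \<in> shell_trace m (padded n Q)"
      using mem_padded_trace[OF Q_in(1) x] .
    ultimately show "x \<in> \<Union>(padded_traces F m m \<union> padded_traces F m (m - 1))"
      unfolding padded_traces_def using Q x by blast
  qed
  ultimately show ?thesis
    unfolding shell_cover_def by blast
qed

lemma cover_cost_Un_le:
  assumes "finite A" "finite B"
  shows "cover_cost m \<rho> (A \<union> B) \<le> cover_cost m \<rho> A + cover_cost m \<rho> B"
proof -
  have "cover_cost m \<rho> (A \<union> B) + cover_cost m \<rho> (A \<inter> B) = cover_cost m \<rho> A + cover_cost m \<rho> B"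
    unfolding cover_cost_def using assms by (rule sum.union_inter)
  then show ?thesis
    using cover_cost_nonneg[of m \<rho> "A \<inter> B"] by linarith
qed

lemma cover_cost_padded_traces_le:
  assumes bound: "\<And>(m::nat) l t. 1 \<le> l \<Longrightarrow> l \<le> 2 ^ m \<Longrightarrow> 0 \<le> t \<Longrightarrow> t \<le> l + 2 * real m ^ 2 \<Longrightarrow>
       (t / 2 ^ m) powr (\<rho> + \<epsilon>) \<le> C * (l / 2 ^ m) powr \<rho>"
    and "0 \<le> C" "0 \<le> \<rho>" "shell_cover n E (F n)" "1 \<le> n" "n \<le> m"
  shows "cover_cost m (\<rho> + \<epsilon>) (padded_traces F m n) \<le> C * cover_cost n \<rho> (F n)"
proof -
  define A where "A = {Q \<in> F n. Q \<noteq> {} \<and> padded n Q \<inter> shell m \<noteq> {}}"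
  have fin: "finite (F n)" and Q: "\<And>Q. Q \<in> F n \<Longrightarrow> int_interval Q \<and> Q \<subseteq> shell n"
    using assms(4) unfolding shell_cover_def by auto
  have term_le: "(ilen (shell_trace m (padded n Q)) / 2 ^ m) powr (\<rho> + \<epsilon>) \<le> C * (ilen Q / 2 ^ n) powr \<rho>"
    if QA: "Q \<in> A" for Q
  proof -
    obtain x where "x \<in> padded n Q" "x \<in> shell m"
      using QA unfolding A_def by blast
    with QA Q show ?thesis
      unfolding A_def by (intro padded_trace_cost_le[OF bound assms(2,3,5,6)]) auto
  qed
  have "cover_cost m (\<rho> + \<epsilon>) (padded_traces F m n)
      \<le> (\<Sum>Q\<in>A. (ilen (shell_trace m (padded n Q)) / 2 ^ m) powr (\<rho> + \<epsilon>))"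
    unfolding cover_cost_def padded_traces_def A_def[symmetric]
    by (rule order_trans[OF sum_image_le]) (use fin in \<open>auto simp: A_def\<close>)
  also have "\<dots> \<le> (\<Sum>Q\<in>A. C * (ilen Q / 2 ^ n) powr \<rho>)"
    using term_le by (rule sum_mono)
  also have "\<dots> \<le> (\<Sum>Q\<in>F n. C * (ilen Q / 2 ^ n) powr \<rho>)"
    using fin \<open>0 \<le> C\<close> by (intro sum_mono2) (auto simp: A_def)
  also have "\<dots> = C * cover_cost n \<rho> (F n)"
    unfolding cover_cost_def by (simp add: sum_distrib_left)
  finally show ?thesis .
qed

lemma nu_padded_union_le:
  assumes covers: "\<And>n. shell_cover n E (F n)"
    and bound: "\<And>(m::nat) l t. 1 \<le> l \<Longrightarrow> l \<le> 2 ^ m \<Longrightarrow> 0 \<le> t \<Longrightarrow> t \<le> l + 2 * real m ^ 2 \<Longrightarrow>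
       (t / 2 ^ m) powr (\<rho> + \<epsilon>) \<le> C * (l / 2 ^ m) powr \<rho>"
    and "0 \<le> C" "0 \<le> \<rho>" "6 \<le> m"
  shows "nu m (\<rho> + \<epsilon>) (\<Union>n\<in>{1..}. \<Union>(padded_family F n))
    \<le> C * (cover_cost m \<rho> (F m) + cover_cost (m - 1) \<rho> (F (m - 1)))"
proof -
  have fin: "finite (padded_traces F m n)" for n
    using covers[of n] unfolding shell_cover_def padded_traces_def by auto
  have "nu m (\<rho> + \<epsilon>) (\<Union>n\<in>{1..}. \<Union>(padded_family F n))
      \<le> cover_cost m (\<rho> + \<epsilon>) (padded_traces F m m \<union> padded_traces F m (m - 1))"
    by (rule nu_le_cover_cost[OF shell_cover_padded_traces[OF covers \<open>6 \<le> m\<close>]])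
  also have "\<dots> \<le> cover_cost m (\<rho> + \<epsilon>) (padded_traces F m m) + cover_cost m (\<rho> + \<epsilon>) (padded_traces F m (m - 1))"
    by (rule cover_cost_Un_le[OF fin fin])
  also have "\<dots> \<le> C * cover_cost m \<rho> (F m) + C * cover_cost (m - 1) \<rho> (F (m - 1))"
    using \<open>6 \<le> m\<close> by (intro add_mono cover_cost_padded_traces_le[OF bound assms(3,4) covers]) auto
  finally show ?thesis
    by (simp add: distrib_left)
qed

lemma padded_union_summable_exponent:
  assumes covers: "\<And>n. shell_cover n E (F n)" and summable: "summable (\<lambda>n. cover_cost n \<rho> (F n))"
    and "0 \<le> \<rho>" "0 < \<epsilon>"
  shows "\<rho> + \<epsilon> \<in> summable_exponents (\<Union>n\<in>{1..}. \<Union>(padded_family F n))"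
proof -
  obtain C where "0 \<le> C"
    and bound: "\<And>(m::nat) l t. 1 \<le> l \<Longrightarrow> l \<le> 2 ^ m \<Longrightarrow> 0 \<le> t \<Longrightarrow> t \<le> l + 2 * real m ^ 2 \<Longrightarrow>
       (t / 2 ^ m) powr (\<rho> + \<epsilon>) \<le> C * (l / 2 ^ m) powr \<rho>"
    using exists_powr_ratio_bound[OF assms(3,4)] by blast
  define c where "c n = cover_cost n \<rho> (F n)" for n
  have "summable (\<lambda>n. C * (c (Suc n) + c (Suc n - 1)))"
    using summable unfolding c_def[symmetric] by (intro summable_mult summable_add) (simp_all add: summable_Suc_iff)
  then have "summable (\<lambda>n. nu (Suc n) (\<rho> + \<epsilon>) (\<Union>n\<in>{1..}. \<Union>(padded_family F n)))"
  proof (rule summable_comparison_test'[where N = 5])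
    fix n :: nat assume "5 \<le> n"
    then show "norm (nu (Suc n) (\<rho> + \<epsilon>) (\<Union>n\<in>{1..}. \<Union>(padded_family F n))) \<le> C * (c (Suc n) + c (Suc n - 1))"
      using nu_padded_union_le[OF covers bound \<open>0 \<le> C\<close> \<open>0 \<le> \<rho>\<close>, of "Suc n"] nu_nonneg
      unfolding c_def by simp
  qed
  then show ?thesis
    unfolding summable_exponents_def using assms(3,4) by simp
qed

lemma exists_padded_union_DimH_less:
  assumes "0 < e"
  obtains F where "\<And>n. shell_cover n E (F n)" "DimH (\<Union>n\<in>{1..}. \<Union>(padded_family F n)) < DimH E + e"
proof -
  have "summable_exponents E \<noteq> {}"
    using two_in_summable_exponents by blast
  moreover have "Inf (summable_exponents E) < DimH E + e / 2"
    using \<open>0 < e\<close> unfolding DimH_eq_Inf_summable_exponents by simp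
  ultimately obtain \<rho> where \<rho>: "\<rho> \<in> summable_exponents E" "\<rho> < DimH E + e / 2"
    using cInf_lessD by metis
  obtain F where covers: "\<And>n. shell_cover n E (F n)" and summable: "summable (\<lambda>n. cover_cost n \<rho> (F n))"
    using exists_summable_shell_covers[OF \<rho>(1)] by metis
  have "0 \<le> \<rho>"
    using \<rho>(1) unfolding summable_exponents_def by simp
  with \<open>0 < e\<close> have "\<rho> + e / 2 \<in> summable_exponents (\<Union>n\<in>{1..}. \<Union>(padded_family F n))"
    by (intro padded_union_summable_exponent[OF covers summable]) simp_all
  then have "DimH (\<Union>n\<in>{1..}. \<Union>(padded_family F n)) \<le> \<rho> + e / 2"
    by (rule DimH_le)
  with \<rho>(2) show ?thesis
    using that[OF covers] by linarith
qed

theorem lemma6: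
  fixes E :: "real set"
  assumes "E \<subseteq> {0<..}"
  shows "DimH E = Inf {DimH (\<Union>n\<in>{1..}. \<Union>(R n)) | R :: nat \<Rightarrow> real set set.
           \<forall>n\<ge>1. (\<forall>Q\<in>R n. int_interval Q \<and> (\<exists>k::nat. k \<ge> 1 \<and> ilen Q = real (k * n ^ 2)))
                 \<and> E \<inter> shell n \<subseteq> \<Union>(R n)}" (is "_ = Inf ?S")
proof (rule cInf_eq_non_empty[symmetric])
  have padded_in_S: "DimH (\<Union>n\<in>{1..}. \<Union>(padded_family F n)) \<in> ?S" if "\<And>n. shell_cover n E (F n)" for F
    unfolding mem_Collect_eq by (intro exI[of _ "padded_family F"] conjI refl padded_family_admissible that)
  obtain F where covers: "\<And>n. shell_cover n E (F n)"
    using exists_padded_union_DimH_less[of 1 E] by (metis zero_less_one)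
  show "?S \<noteq> {}"
    using padded_in_S[OF covers] by blast
  show "DimH E \<le> x" if "x \<in> ?S" for x
  proof -
    obtain R where x: "x = DimH (\<Union>n\<in>{1..}. \<Union>(R n))"
      and covers: "\<And>n. 1 \<le> n \<Longrightarrow> E \<inter> shell n \<subseteq> \<Union>(R n)"
      using \<open>x \<in> ?S\<close> by blast
    show ?thesis
      unfolding x by (rule DimH_mono_shells) (use covers in blast)
  qed
  show "y \<le> DimH E" if lower: "\<And>x. x \<in> ?S \<Longrightarrow> y \<le> x" for y
  proof (rule field_le_epsilon)
    fix e :: real assume "0 < e"
    then obtain F where covers: "\<And>n. shell_cover n E (F n)"
      and "DimH (\<Union>n\<in>{1..}. \<Union>(padded_family F n)) < DimH E + e"
      using exists_padded_union_DimH_less[of e E] by metis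
    then show "y \<le> DimH E + e"
      using lower[OF padded_in_S[OF covers]] by linarith
  qed
qed

end
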